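(* Let $H$ be a $C^2$ null hypersurface, $n$ a $C^1$ future-directed lightlike vector field tangent to $H$, extended near $p\in H$ to a $C^1$ lightlike field with $\nabla_nn=\kappa n$. Let $V$ be a smooth future-directed timelike vector field and use local cylinder coordinates $(x^0,\mathbf x)$ with $V=\partial_0$ in which $H$ is the graph of a $C^2$ function $x^0=h(\mathbf x)$. Define on $H$ the functions of $\mathbf x$ $$\tilde n^i=-g(n,V)\,\big[g^{ij}(h(\mathbf x),\mathbf x)\,\partial_jh-g^{i0}(h(\mathbf x),\mathbf x)\big],\quad i=1,\dots,n,$$ and $\theta=\nabla_\mu n^\mu|_{x^0=h(\mathbf x)}-\kappa$. Then for every $C^1$ function $\varphi:M\to\mathbb R$, $$\partial_i\Big(\varphi\,\tilde n^i\,\frac{\sqrt{-|g|(h(\mathbf x),\mathbf x)}}{-g(n,V)}\Big)=\big[\varphi\,\theta+\partial_n\varphi\big]\frac{\sqrt{-|g|(h(\mathbf x),\mathbf x)}}{-g(n,V)},$$ where all quantities are evaluated at $(h(\mathbf x),\mathbf x)$. Consequently $$\theta=\frac{-g(n,V)}{\sqrt{-|g|}}\,\partial_i\Big\{\big[g^{ij}\partial_jh-g^{i0}\big]\sqrt{-|g|}\Big\}\Big|_{x^0=h(\mathbf x)} .$$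
   Context: Spacetime: paracompact time-oriented Lorentzian manifold of dimension $n+1\ge2$, signature $(-,+,\dots,+)$, $C^3$ metric; $|g|$ denotes $\det g_{\mu\nu}$, $g^{\mu\nu}$ the inverse metric. Local cylinder coordinates: with $S$ a small hypersurface transverse to $V$ carrying coordinates $\mathbf x=(x^1,\dots,x^n)$, the point $\varphi_{x^0}(\mathbf x)$ ($\varphi$ the flow of $V$) has coordinates $(x^0,\mathbf x)$, so $V=\partial_0$. The vector field $\tilde n=\tilde n^i\partial_i$ is the projection of $n$ along the flow of $V$. *)

theory Defs
  imports "HOL-Analysis.Analysis"
begin

text \<open>Everything is expressed in a local cylinder chart.  A spacetime point has
coordinates (x0, x) in real \<times> (real^'n); spacetime indices are of type 'n option,
with None the time index 0 and Some i the spatial index i.  So the spacetime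
dimension is CARD('n) + 1 \<ge> 2.  The vector field V is the coordinate field
d/dx0, with components axis None 1.\<close>

definition ev :: "'n::finite option \<Rightarrow> real \<times> (real^'n)" where
  "ev mu = (case mu of None \<Rightarrow> (1, 0) | Some i \<Rightarrow> (0, axis i 1))"

definition pd :: "'n::finite option \<Rightarrow> (real \<times> (real^'n) \<Rightarrow> real) \<Rightarrow> real \<times> (real^'n) \<Rightarrow> real" where
  "pd mu f p = frechet_derivative f (at p) (ev mu)"

definition spd :: "'n::finite \<Rightarrow> (real^'n \<Rightarrow> real) \<Rightarrow> real^'n \<Rightarrow> real" where
  "spd i u x = frechet_derivative u (at x) (axis i 1)"

primrec Ck :: "nat \<Rightarrow> 'a::euclidean_space set \<Rightarrow> ('a \<Rightarrow> real) \<Rightarrow> bool" where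
  "Ck 0 U f = continuous_on U f"
| "Ck (Suc k) U f = ((\<forall>x\<in>U. f differentiable (at x)) \<and>
                     (\<forall>b\<in>Basis. Ck k U (\<lambda>x. frechet_derivative f (at x) b)))"

definition gform :: "real^'k^'k \<Rightarrow> real^'k \<Rightarrow> real^'k \<Rightarrow> real" where
  "gform A v w = (\<Sum>a\<in>UNIV. \<Sum>b\<in>UNIV. A $ a $ b * v $ a * w $ b)"

definition lorentzian :: "real^('n::finite option)^('n option) \<Rightarrow> bool" where
  "lorentzian A \<longleftrightarrow> transpose A = A \<and>
     (\<exists>P::real^('n option)^('n option). invertible P \<and> transpose P ** A ** P =
        (\<chi> a b. if a = b then (if a = None then -1 else 1) else 0))"

definition ginv :: "(real \<times> (real^'n) \<Rightarrow> real^('n::finite option)^('n option))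
                     \<Rightarrow> real \<times> (real^'n) \<Rightarrow> real^('n option)^('n option)" where
  "ginv g p = matrix_inv (g p)"

definition christoffel :: "(real \<times> (real^'n) \<Rightarrow> real^('n::finite option)^('n option))
     \<Rightarrow> 'n option \<Rightarrow> 'n option \<Rightarrow> 'n option \<Rightarrow> real \<times> (real^'n) \<Rightarrow> real" where
  "christoffel g a b c p = (1/2) * (\<Sum>s\<in>UNIV. ginv g p $ a $ s *
      (pd b (\<lambda>q. g q $ s $ c) p + pd c (\<lambda>q. g q $ s $ b) p - pd s (\<lambda>q. g q $ b $ c) p))"

definition covd :: "(real \<times> (real^'n) \<Rightarrow> real^('n::finite option)^('n option))
     \<Rightarrow> (real \<times> (real^'n) \<Rightarrow> real^('n option)) \<Rightarrow> (real \<times> (real^'n) \<Rightarrow> real^('n option))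
     \<Rightarrow> real \<times> (real^'n) \<Rightarrow> real^('n option)" where
  "covd g X Y p = (\<chi> a. (\<Sum>b\<in>UNIV. X p $ b * pd b (\<lambda>q. Y q $ a) p)
      + (\<Sum>b\<in>UNIV. \<Sum>c\<in>UNIV. christoffel g a b c p * X p $ b * Y p $ c))"

definition divergence :: "(real \<times> (real^'n) \<Rightarrow> real^('n::finite option)^('n option))
     \<Rightarrow> (real \<times> (real^'n) \<Rightarrow> real^('n option)) \<Rightarrow> real \<times> (real^'n) \<Rightarrow> real" where
  "divergence g X p = (\<Sum>a\<in>UNIV. pd a (\<lambda>q. X q $ a) p)
      + (\<Sum>a\<in>UNIV. \<Sum>b\<in>UNIV. christoffel g a a b p * X p $ b)"

definition dirderiv :: "(real \<times> (real^'n) \<Rightarrow> real^('n::finite option))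
     \<Rightarrow> (real \<times> (real^'n) \<Rightarrow> real) \<Rightarrow> real \<times> (real^'n) \<Rightarrow> real" where
  "dirderiv X phi p = (\<Sum>a\<in>UNIV. X p $ a * pd a phi p)"

definition graph_tangent :: "(real^'n::finite \<Rightarrow> real) \<Rightarrow> real^'n \<Rightarrow> real^('n option) \<Rightarrow> bool" where
  "graph_tangent h x v \<longleftrightarrow> (\<exists>w. v $ None = frechet_derivative h (at x) w \<and> (\<forall>j. v $ Some j = w $ j))"

text \<open>The graph is a null hypersurface at (h x, x): the induced metric is degenerate.\<close>
definition null_graph :: "(real \<times> (real^'n) \<Rightarrow> real^('n::finite option)^('n option))
     \<Rightarrow> (real^'n \<Rightarrow> real) \<Rightarrow> real^'n \<Rightarrow> bool" where
  "null_graph g h x \<longleftrightarrow> (\<exists>v. graph_tangent h x v \<and> v \<noteq> 0 \<and>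
       (\<forall>u. graph_tangent h x u \<longrightarrow> gform (g (h x, x)) v u = 0))"

definition gnV :: "(real \<times> (real^'n) \<Rightarrow> real^('n::finite option)^('n option))
     \<Rightarrow> (real \<times> (real^'n) \<Rightarrow> real^('n option)) \<Rightarrow> real \<times> (real^'n) \<Rightarrow> real" where
  "gnV g nf p = gform (g p) (nf p) (axis None 1)"

definition bracket :: "(real \<times> (real^'n) \<Rightarrow> real^('n::finite option)^('n option))
     \<Rightarrow> (real^'n \<Rightarrow> real) \<Rightarrow> 'n \<Rightarrow> real^'n \<Rightarrow> real" where
  "bracket g h i x = (\<Sum>j\<in>UNIV. ginv g (h x, x) $ Some i $ Some j * spd j h x)
                     - ginv g (h x, x) $ Some i $ None"

definition ntilde :: "(real \<times> (real^'n) \<Rightarrow> real^('n::finite option)^('n option))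
     \<Rightarrow> (real^'n \<Rightarrow> real) \<Rightarrow> (real \<times> (real^'n) \<Rightarrow> real^('n option)) \<Rightarrow> 'n \<Rightarrow> real^'n \<Rightarrow> real" where
  "ntilde g h nf i x = - gnV g nf (h x, x) * bracket g h i x"

definition volH :: "(real \<times> (real^'n) \<Rightarrow> real^('n::finite option)^('n option))
     \<Rightarrow> (real^'n \<Rightarrow> real) \<Rightarrow> real^'n \<Rightarrow> real" where
  "volH g h x = sqrt (- det (g (h x, x)))"

definition thetaH :: "(real \<times> (real^'n) \<Rightarrow> real^('n::finite option)^('n option))
     \<Rightarrow> (real^'n \<Rightarrow> real) \<Rightarrow> (real \<times> (real^'n) \<Rightarrow> real^('n option))
     \<Rightarrow> (real \<times> (real^'n) \<Rightarrow> real) \<Rightarrow> real^'n \<Rightarrow> real" where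
  "thetaH g h nf kappa x = divergence g nf (h x, x) - kappa (h x, x)"

end

theory Submission
  imports Defs
begin

(* On the graph x0 = h(x) the vector ntilde equals n (because the graph
   is null, n is its normal), so the flux is F_i = phi n^i vol / psi with
   vol = sqrt(-det g) and psi = -g(n,V); it is the restriction of the spacetime field
   W n^i with weight W = phi vol / psi.  By the chain rule
   d_i F_i = d_i(W n^i) + d_0(W n^i) d_i h, and since n is tangent to the graph
   (n^0 = n^i d_i h) this regroups as  n(W) + W d_a n^a + W [d_0 n^i d_i h - d_0 n^0].
   Three pointwise identities evaluate the pieces, with Q = d_0 g_{ab} n^a n^b:
   (1) d_c vol = vol Gamma^a_{ac}                (Jacobi's formula for det);
   (2) n(psi) = kappa psi - Q/2                   (pregeodesic equation for n);
   (3) psi [d_0 n^i d_i h - d_0 n^0] = -Q/2       (n is null and normal to the graph).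
   The Q-terms cancel, leaving (phi theta + n(phi)) vol / psi.  The theorem takes phi as given for its
   first claim and phi = 1 for the formula for theta. *)

lemma sum_over_option:
  "(\<Sum>a\<in>(UNIV::'n::finite option set). f a) = f None + (\<Sum>i\<in>UNIV. f (Some i))"
proof -
  have "(UNIV::'n option set) = insert None (range Some)"
    by (auto, metis not_None_eq rangeI)
  then have "sum f UNIV = sum f (insert None (range Some))" by metis
  then show ?thesis by (simp add: sum.reindex)
qed

lemma sum_symmetric_kernel_swap:
  fixes G :: "'k::finite \<Rightarrow> 'k \<Rightarrow> real"
  assumes "\<And>a b. G a b = G b a"
  shows "(\<Sum>a\<in>UNIV. \<Sum>b\<in>UNIV. G a b * X a * Y b) = (\<Sum>a\<in>UNIV. \<Sum>b\<in>UNIV. G a b * Y a * X b)"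
  by (subst sum.swap) (simp add: assms mult.commute mult.left_commute)

subsection \<open>Inverse matrices\<close>

lemma matrix_inv_mult:
  fixes A :: "real^'m::finite^'m"
  assumes "det A \<noteq> 0"
  shows "A ** matrix_inv A = mat 1" "matrix_inv A ** A = mat 1"
proof -
  have "invertible A" using assms invertible_det_nz by blast
  then have "\<exists>A'. A ** A' = mat 1 \<and> A' ** A = mat 1" unfolding invertible_def .
  then have "A ** matrix_inv A = mat 1 \<and> matrix_inv A ** A = mat 1"
    unfolding matrix_inv_def by (rule someI_ex)
  then show "A ** matrix_inv A = mat 1" "matrix_inv A ** A = mat 1" by auto
qed

lemma matrix_inv_left_entry:
  fixes A :: "real^'m::finite^'m"
  assumes "det A \<noteq> 0"
  shows "(\<Sum>k\<in>UNIV. matrix_inv A $ i $ k * A $ k $ j) = (if i = j then 1 else 0)"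
proof -
  have "(matrix_inv A ** A) $ i $ j = mat 1 $ i $ j" using matrix_inv_mult(2)[OF assms] by simp
  then show ?thesis by (simp add: matrix_matrix_mult_def mat_def)
qed

lemma matrix_inv_right_entry:
  fixes A :: "real^'m::finite^'m"
  assumes "det A \<noteq> 0"
  shows "(\<Sum>k\<in>UNIV. A $ i $ k * matrix_inv A $ k $ j) = (if i = j then 1 else 0)"
proof -
  have "(A ** matrix_inv A) $ i $ j = mat 1 $ i $ j" using matrix_inv_mult(1)[OF assms] by simp
  then show ?thesis by (simp add: matrix_matrix_mult_def mat_def)
qed

lemma matrix_inv_symmetric:
  fixes A :: "real^'m::finite^'m"
  assumes "det A \<noteq> 0" "transpose A = A"
  shows "transpose (matrix_inv A) = matrix_inv A"
proof -
  have "transpose (matrix_inv A) ** A = mat 1"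
    using matrix_inv_mult(1)[OF assms(1)] assms(2)
    by (metis matrix_transpose_mul transpose_mat)
  then have "transpose (matrix_inv A) ** A ** matrix_inv A = matrix_inv A"
    by simp
  then show ?thesis using matrix_inv_mult(1)[OF assms(1)]
    by (metis matrix_mul_assoc matrix_mul_rid)
qed

lemma det_row_replace:
  fixes A :: "real^'m::finite^'m"
  assumes "det A \<noteq> 0"
  shows "det (\<chi> i. if i = k then r else A $ i) = det A * (\<Sum>l\<in>UNIV. r $ l * matrix_inv A $ l $ k)"
proof -
  define x where "x = (\<chi> m. \<Sum>l\<in>UNIV. r $ l * matrix_inv A $ l $ m)"
  have r: "r = (\<Sum>i\<in>UNIV. x$i *s row i A)"
  proof -
    have "(\<Sum>i\<in>UNIV. x$i * A$i$j) = r $ j" for j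
    proof -
      have "(\<Sum>i\<in>UNIV. x$i * A$i$j) = (\<Sum>l\<in>UNIV. r $ l * (\<Sum>i\<in>UNIV. matrix_inv A $ l $ i * A $ i $ j))"
        unfolding x_def by (simp add: sum_distrib_left sum_distrib_right algebra_simps) (subst sum.swap, simp)
      then show ?thesis
        by (simp add: matrix_inv_left_entry[OF assms] if_distrib cong: if_cong)
    qed
    then show ?thesis by (simp add: vec_eq_iff row_def)
  qed
  have rows: "\<And>i. row i A = A $ i" by (simp add: row_def vec_eq_iff)
  have "det (\<chi> i. if i = k then r else A $ i) = det (\<chi> i. if i = k then (\<Sum>i\<in>UNIV. x$i *s row i A) else row i A)"
    by (simp only: rows r[unfolded rows, symmetric])
  also have "\<dots> = x $ k * det A" by (rule cramer_lemma_transpose)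
  finally show ?thesis unfolding x_def by simp
qed

subsection \<open>Lorentzian matrices\<close>

definition minkowski :: "real^('n::finite option)^('n option)" where
  "minkowski = (\<chi> a b. if a = b then (if a = None then -1 else 1) else 0)"

lemma det_minkowski: "det (minkowski::real^('n::finite option)^('n option)) = -1"
proof -
  have "det (minkowski::real^('n option)^('n option)) = (\<Prod>a\<in>UNIV. (minkowski::real^('n option)^('n option)) $ a $ a)"
    by (rule det_diagonal) (simp add: minkowski_def)
  also have "(UNIV::'n option set) = insert None (range Some)"
    by (auto, metis not_None_eq rangeI)
  finally show ?thesis by (simp add: prod.reindex minkowski_def)
qed

text \<open>A Lorentzian matrix is congruent to the Minkowski matrix, so its determinant is negative.\<close>

lemma lorentzian_det_neg:
  fixes A :: "real^('n::finite option)^('n option)"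
  assumes "lorentzian A"
  shows "det A < 0"
proof -
  obtain P :: "real^('n option)^('n option)" where P: "transpose P ** A ** P = minkowski"
    using assms unfolding lorentzian_def minkowski_def by blast
  have "det A * (det P * det P) = -1"
    using arg_cong[OF P, of det] det_minkowski by (simp add: det_mul algebra_simps)
  moreover have "det P * det P \<ge> 0" by simp
  ultimately show ?thesis
    by (smt (verit) mult_nonneg_nonneg)
qed

lemma gform_congruence:
  "gform A (P *v a) (P *v b) = gform (transpose P ** A ** P) a b"
proof -
  have inner: "\<And>A v w. gform A v w = inner v (A *v w)"
    by (simp add: gform_def inner_vec_def matrix_vector_mult_def sum_distrib_left algebra_simps)
  show ?thesis unfolding inner
    by (metis dot_lmul_matrix matrix_vector_mul_assoc vector_transpose_matrix)
qed

lemma gform_minkowski: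
  "gform (minkowski::real^('n::finite option)^('n option)) a b =
     - a$None * b$None + (\<Sum>i\<in>UNIV. a $ Some i * b $ Some i)"
proof -
  have diag: "(\<Sum>d\<in>UNIV. (minkowski::real^('n option)^('n option))$c$d * a$c * b$d) = minkowski$c$c * a$c * b$c" for c
  proof -
    have "(\<Sum>d\<in>UNIV. (minkowski::real^('n option)^('n option))$c$d * a$c * b$d)
        = (\<Sum>d\<in>UNIV. if d = c then minkowski$c$c * a$c * b$d else 0)"
      by (rule sum.cong) (auto simp: minkowski_def)
    then show ?thesis by simp
  qed
  show ?thesis unfolding gform_def diag by (simp add: sum_over_option minkowski_def)
qed

lemma gform_symmetric:
  assumes "transpose A = A" shows "gform A x y = gform A y x"
proof -
  have "\<And>a b. A$a$b = A$b$a" using assms by (metis transpose_def vec_lambda_beta)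
  then show ?thesis unfolding gform_def
    by (subst sum.swap) (simp add: algebra_simps)
qed

lemma gform_scaleR_left: "gform A (c *\<^sub>R x) y = c * gform A x y"
  by (simp add: gform_def sum_distrib_left algebra_simps)

lemma gform_diff_scaleR:
  "gform M (u - c *\<^sub>R v) (u - c *\<^sub>R v) =
   gform M u u - c * gform M u v - c * gform M v u + c*c * gform M v v"
  by (simp add: gform_def algebra_simps sum_subtractf sum.distrib sum_distrib_left)

lemma minkowski_null_spatial_zero:
  fixes z :: "real^('n::finite option)"
  assumes "gform minkowski z z = 0" "z $ None = 0"
  shows "z = 0"
proof -
  have "(\<Sum>i\<in>UNIV. z $ Some i * z $ Some i) = 0" using assms by (simp add: gform_minkowski)
  then have "\<forall>i\<in>UNIV. z $ Some i * z $ Some i = 0"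
    by (subst sum_nonneg_eq_0_iff[symmetric]) auto
  then have "\<forall>a. z $ a = 0" using assms(2) by (metis (full_types) mult_eq_0_iff not_None_eq UNIV_I)
  then show "z = 0" by (simp add: vec_eq_iff)
qed

text \<open>Two mutually orthogonal null vectors of a Lorentzian form are parallel.
  This identifies the null normal n with the degenerate direction of a null graph.\<close>

lemma lorentzian_null_orthogonal_parallel:
  fixes A :: "real^('n::finite option)^('n option)"
  assumes L: "lorentzian A" and x0: "x \<noteq> 0"
    and xx: "gform A x x = 0" and yy: "gform A y y = 0" and xy: "gform A x y = 0"
  shows "\<exists>c. y = c *\<^sub>R x"
proof -
  obtain P :: "real^('n option)^('n option)" where P: "invertible P"
    and PAP: "transpose P ** A ** P = minkowski" and sym: "transpose A = A"
    using L unfolding lorentzian_def minkowski_def by blast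
  have PQ: "P ** matrix_inv P = mat 1" using P matrix_inv_mult invertible_det_nz by blast
  define x' where "x' = matrix_inv P *v x"
  define y' where "y' = matrix_inv P *v y"
  have xP: "x = P *v x'" unfolding x'_def by (simp add: matrix_vector_mul_assoc PQ)
  have yP: "y = P *v y'" unfolding y'_def by (simp add: matrix_vector_mul_assoc PQ)
  have gt: "\<And>a b. gform A (P *v a) (P *v b) = gform minkowski a b"
    using gform_congruence PAP by metis
  have x'x': "gform minkowski x' x' = 0" using xx xP gt by metis
  have x'0: "x' $ None \<noteq> 0"
  proof
    assume "x' $ None = 0"
    then have "x' = 0" using x'x' minkowski_null_spatial_zero by blast
    then show False using x0 xP by simp
  qed
  define c where "c = y' $ None / x' $ None"
  define z where "z = y' - c *\<^sub>R x'"
  have "gform minkowski y' y' = 0" "gform minkowski x' y' = 0" "gform minkowski y' x' = 0"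
    using yy xy xP yP gt gform_symmetric[OF sym] by metis+
  then have "gform minkowski z z = 0" unfolding z_def gform_diff_scaleR using x'x' by simp
  moreover have "z $ None = 0" using x'0 by (simp add: z_def c_def)
  ultimately have "z = 0" using minkowski_null_spatial_zero by blast
  then have "y = c *\<^sub>R x" using xP yP by (simp add: z_def matrix_vector_mult_scaleR)
  then show ?thesis by blast
qed

subsection \<open>Frechet derivatives of real-valued functions\<close>

text \<open>Derivative rules stated for the Frechet derivative itself, since the coordinate
  derivatives pd and spd of the definitions are its values on basis vectors.\<close>

abbreviation FD :: "('a::real_normed_vector \<Rightarrow> 'b::real_normed_vector) \<Rightarrow> 'a \<Rightarrow> 'a \<Rightarrow> 'b" where
  "FD f p \<equiv> frechet_derivative f (at p)"

lemma FD_works: "f differentiable (at p) \<Longrightarrow> (f has_derivative FD f p) (at p)"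
  using frechet_derivative_works by blast

lemma FD_eq: "(f has_derivative f') (at p) \<Longrightarrow> FD f p v = f' v"
  using frechet_derivative_at by metis

lemma FD_minus:
  fixes f :: "'a::real_normed_vector \<Rightarrow> real"
  assumes "f differentiable (at p)"
  shows "FD (\<lambda>q. - f q) p v = - FD f p v"
  by (rule FD_eq) (intro has_derivative_minus FD_works assms)

lemma FD_mult:
  fixes f g :: "'a::real_normed_vector \<Rightarrow> real"
  assumes "f differentiable (at p)" "g differentiable (at p)"
  shows "FD (\<lambda>q. f q * g q) p v = FD f p v * g p + f p * FD g p v"
proof -
  have "((\<lambda>q. f q * g q) has_derivative (\<lambda>v. f p * FD g p v + FD f p v * g p)) (at p)"
    by (intro has_derivative_mult FD_works assms)
  then show ?thesis by (simp add: FD_eq algebra_simps)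
qed

lemma FD_divide:
  fixes f g :: "'a::real_normed_vector \<Rightarrow> real"
  assumes "f differentiable (at p)" "g differentiable (at p)" "g p \<noteq> 0"
  shows "FD (\<lambda>q. f q / g q) p v = FD f p v / g p - f p * FD g p v / (g p)^2"
proof -
  have "((\<lambda>q. f q / g q) has_derivative (\<lambda>h. (FD f p h * g p - f p * FD g p h) / (g p * g p))) (at p)"
    by (intro has_derivative_divide' FD_works assms)
  then show ?thesis using assms(3) by (simp add: FD_eq field_simps power2_eq_square)
qed

lemma FD_sqrt:
  fixes f :: "'a::real_normed_vector \<Rightarrow> real"
  assumes "f differentiable (at p)" "f p > 0"
  shows "(\<lambda>q. sqrt (f q)) differentiable (at p)"
    and "FD (\<lambda>q. sqrt (f q)) p v = FD f p v / (2 * sqrt (f p))"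
proof -
  have h: "((\<lambda>q. sqrt (f q)) has_derivative (\<lambda>v. FD f p v * (inverse (sqrt (f p)) / 2))) (at p)"
    by (rule DERIV_compose_FDERIV[OF DERIV_real_sqrt[OF assms(2)] FD_works[OF assms(1)]])
  then show "(\<lambda>q. sqrt (f q)) differentiable (at p)" unfolding differentiable_def by blast
  from h show "FD (\<lambda>q. sqrt (f q)) p v = FD f p v / (2 * sqrt (f p))"
    by (simp add: FD_eq field_simps)
qed

lemma FD_sum:
  fixes f :: "'i \<Rightarrow> 'a::real_normed_vector \<Rightarrow> real"
  assumes "finite I" "\<And>i. i \<in> I \<Longrightarrow> f i differentiable (at p)"
  shows "FD (\<lambda>q. \<Sum>i\<in>I. f i q) p v = (\<Sum>i\<in>I. FD (f i) p v)"
proof -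
  have "((\<lambda>q. \<Sum>i\<in>I. f i q) has_derivative (\<lambda>v. \<Sum>i\<in>I. FD (f i) p v)) (at p)"
    using assms by (intro has_derivative_sum FD_works) auto
  then show ?thesis by (simp add: FD_eq)
qed

lemma FD_const: "FD (\<lambda>q. c) p v = (0::real)"
  by (rule FD_eq) (rule has_derivative_const)

lemma FD_local:
  assumes "f differentiable (at p)" "open S" "p \<in> S" "\<And>q. q \<in> S \<Longrightarrow> f q = g q"
  shows "g differentiable (at p)" and "FD g p = FD f p"
proof -
  have h: "(g has_derivative FD f p) (at p)"
    using has_derivative_transform_within_open[OF FD_works[OF assms(1)] assms(2,3)] assms(4) by blast
  then show "g differentiable (at p)" unfolding differentiable_def by blast
  from h show "FD g p = FD f p" using frechet_derivative_at by metis
qed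

lemma spd_local:
  assumes "u differentiable (at x)" "open S" "x \<in> S" "\<And>y. y \<in> S \<Longrightarrow> u y = v y"
  shows "v differentiable (at x)" and "spd i v x = spd i u x"
  using FD_local[OF assms] unfolding spd_def by auto

lemma FD_det:
  fixes A :: "'a::real_normed_vector \<Rightarrow> real^'m::finite^'m"
  assumes d: "\<And>a b. (\<lambda>q. A q $ a $ b) differentiable (at p)"
  shows "(\<lambda>q. det (A q)) differentiable (at p)"
    and "FD (\<lambda>q. det (A q)) p v =
      (\<Sum>k\<in>UNIV. det (\<chi> i. if i = k then (\<chi> l. FD (\<lambda>q. A q $ k $ l) p v) else A p $ i))"
proof -
  let ?P = "{\<sigma>. \<sigma> permutes (UNIV::'m set)}"
  let ?R = "\<lambda>k. \<chi> i. if i = k then (\<chi> l. FD (\<lambda>q. A q $ k $ l) p v) else A p $ i"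
  have h: "((\<lambda>q. det (A q)) has_derivative
     (\<lambda>v. \<Sum>\<sigma>\<in>?P. of_int (sign \<sigma>) * (\<Sum>i\<in>UNIV. FD (\<lambda>q. A q $ i $ \<sigma> i) p v *
            (\<Prod>j\<in>UNIV - {i}. A p $ j $ \<sigma> j)))) (at p)"
    unfolding det_def
    by (intro has_derivative_sum has_derivative_mult_right has_derivative_prod FD_works d)
  then show "(\<lambda>q. det (A q)) differentiable (at p)" unfolding differentiable_def by blast
  have row: "(\<Prod>j\<in>UNIV. ?R k $ j $ \<sigma> j) = FD (\<lambda>q. A q $ k $ \<sigma> k) p v * (\<Prod>j\<in>UNIV - {k}. A p $ j $ \<sigma> j)"
    for \<sigma> k
  proof -
    have "(\<Prod>j\<in>UNIV. ?R k $ j $ \<sigma> j) = ?R k $ k $ \<sigma> k * (\<Prod>j\<in>UNIV - {k}. ?R k $ j $ \<sigma> j)"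
      by (rule prod.remove) auto
    also have "(\<Prod>j\<in>UNIV - {k}. ?R k $ j $ \<sigma> j) = (\<Prod>j\<in>UNIV - {k}. A p $ j $ \<sigma> j)"
      by (rule prod.cong) auto
    finally show ?thesis by simp
  qed
  have "FD (\<lambda>q. det (A q)) p v = (\<Sum>\<sigma>\<in>?P. of_int (sign \<sigma>) * (\<Sum>i\<in>UNIV. FD (\<lambda>q. A q $ i $ \<sigma> i) p v *
            (\<Prod>j\<in>UNIV - {i}. A p $ j $ \<sigma> j)))"
    using FD_eq[OF h] .
  also have "\<dots> = (\<Sum>k\<in>UNIV. \<Sum>\<sigma>\<in>?P. of_int (sign \<sigma>) * (\<Prod>j\<in>UNIV. ?R k $ j $ \<sigma> j))"
    unfolding row by (subst sum.swap) (simp add: sum_distrib_left algebra_simps)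
  also have "\<dots> = (\<Sum>k\<in>UNIV. det (?R k))"
    unfolding det_def ..
  finally show "FD (\<lambda>q. det (A q)) p v = (\<Sum>k\<in>UNIV. det (?R k))" .
qed

lemma FD_det_inverse:
  fixes A :: "'a::real_normed_vector \<Rightarrow> real^'m::finite^'m"
  assumes "\<And>a b. (\<lambda>q. A q $ a $ b) differentiable (at p)" and "det (A p) \<noteq> 0"
  shows "FD (\<lambda>q. det (A q)) p v =
      det (A p) * (\<Sum>k\<in>UNIV. \<Sum>l\<in>UNIV. FD (\<lambda>q. A q $ k $ l) p v * matrix_inv (A p) $ l $ k)"
  unfolding FD_det(2)[OF assms(1)] det_row_replace[OF assms(2)] by (simp add: sum_distrib_left)

subsection \<open>Functions on a graph\<close>

lemma linear_axis_expansion: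
  assumes "linear f"
  shows "f (w::real^'n::finite) = (\<Sum>j\<in>UNIV. w $ j * f (axis j (1::real)))"
proof -
  have "w = (\<Sum>j\<in>UNIV. w $ j *\<^sub>R axis j 1)"
    by (simp add: vec_eq_iff axis_def if_distrib cong: if_cong)
  then have "f w = f (\<Sum>j\<in>UNIV. w $ j *\<^sub>R axis j 1)" by metis
  also have "\<dots> = (\<Sum>j\<in>UNIV. w $ j *\<^sub>R f (axis j 1))"
    using linear_sum[OF assms, of "\<lambda>j. w $ j *\<^sub>R axis j 1" UNIV] linear_scale[OF assms] by simp
  finally show ?thesis by simp
qed

lemma spd_graph_composition:
  fixes F :: "real \<times> (real^'n::finite) \<Rightarrow> real"
  assumes F: "F differentiable (at (h x, x))" and hd: "h differentiable (at x)"
  shows "(\<lambda>y. F (h y, y)) differentiable (at x)"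
    and "spd i (\<lambda>y. F (h y, y)) x = pd (Some i) F (h x, x) + pd None F (h x, x) * spd i h x"
proof -
  have "((\<lambda>y. (h y, y)) has_derivative (\<lambda>w. (FD h x w, w))) (at x)"
    by (intro has_derivative_Pair FD_works hd has_derivative_ident)
  from diff_chain_at[OF this FD_works[OF F]]
  have c: "((\<lambda>y. F (h y, y)) has_derivative (\<lambda>w. FD F (h x, x) (FD h x w, w))) (at x)"
    by (simp add: o_def)
  then show "(\<lambda>y. F (h y, y)) differentiable (at x)" unfolding differentiable_def by blast
  have lin: "linear (FD F (h x, x))" using F linear_frechet_derivative by blast
  have split: "(FD h x (axis i 1), axis i 1) = FD h x (axis i 1) *\<^sub>R (1, 0) + (0, axis i (1::real))"
    by simp
  have "FD F (h x, x) (FD h x (axis i 1), axis i 1)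
      = FD h x (axis i 1) * FD F (h x, x) (1, 0) + FD F (h x, x) (0, axis i 1)"
    unfolding split by (simp only: linear_add[OF lin] linear_scale[OF lin] real_scaleR_def)
  then show "spd i (\<lambda>y. F (h y, y)) x = pd (Some i) F (h x, x) + pd None F (h x, x) * spd i h x"
    unfolding spd_def pd_def FD_eq[OF c] ev_def by simp
qed

subsection \<open>A Lorentzian metric in a chart\<close>

definition metric_volume :: "('p \<Rightarrow> real^('n::finite option)^('n option)) \<Rightarrow> 'p \<Rightarrow> real" where
  "metric_volume g q = sqrt (- det (g q))"

locale lorentzian_chart =
  fixes g :: "real \<times> (real^'n::finite) \<Rightarrow> real^('n option)^('n option)"
    and U :: "(real \<times> (real^'n)) set"
  assumes chart_open: "open U"
    and metric_differentiable: "\<And>a b p. p \<in> U \<Longrightarrow> (\<lambda>q. g q $ a $ b) differentiable (at p)"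
    and metric_lorentzian: "\<And>p. p \<in> U \<Longrightarrow> lorentzian (g p)"
begin

lemma metric_transpose: "p \<in> U \<Longrightarrow> transpose (g p) = g p"
  using metric_lorentzian unfolding lorentzian_def by blast

lemma metric_symmetric:
  assumes "p \<in> U" shows "g p $ a $ b = g p $ b $ a"
proof -
  have "transpose (g p) $ b $ a = g p $ a $ b" by (simp add: transpose_def)
  then show ?thesis using metric_transpose[OF assms] by simp
qed

lemma metric_det_neg: "p \<in> U \<Longrightarrow> det (g p) < 0"
  using metric_lorentzian lorentzian_det_neg by blast

lemma metric_det_nonzero: "p \<in> U \<Longrightarrow> det (g p) \<noteq> 0"
  using metric_det_neg by (metis less_irrefl)

lemma inverse_metric_symmetric:
  assumes "p \<in> U" shows "ginv g p $ a $ b = ginv g p $ b $ a"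
proof -
  have "transpose (matrix_inv (g p)) $ b $ a = matrix_inv (g p) $ a $ b" by (simp add: transpose_def)
  then show ?thesis
    using matrix_inv_symmetric[OF metric_det_nonzero[OF assms] metric_transpose[OF assms]]
    unfolding ginv_def by simp
qed

text \<open>Since g is symmetric on the open set U, so are its derivatives.\<close>

lemma pd_metric_symmetric:
  assumes "p \<in> U" shows "pd c (\<lambda>q. g q $ a $ b) p = pd c (\<lambda>q. g q $ b $ a) p"
proof -
  have "\<And>q. q \<in> U \<Longrightarrow> g q $ a $ b = g q $ b $ a" by (rule metric_symmetric)
  from FD_local(2)[OF metric_differentiable[OF assms] chart_open assms this]
  show ?thesis unfolding pd_def by simp
qed

lemma christoffel_lowered:
  assumes pU: "p \<in> U"
  shows "(\<Sum>a\<in>UNIV. g p $ e $ a * christoffel g a b c p)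
     = (pd b (\<lambda>q. g q $ e $ c) p + pd c (\<lambda>q. g q $ e $ b) p - pd e (\<lambda>q. g q $ b $ c) p) / 2"
proof -
  define E where "E s = pd b (\<lambda>q. g q $ s $ c) p + pd c (\<lambda>q. g q $ s $ b) p - pd s (\<lambda>q. g q $ b $ c) p" for s
  have "(\<Sum>a\<in>UNIV. g p $ e $ a * christoffel g a b c p)
      = (1/2) * (\<Sum>s\<in>UNIV. (\<Sum>a\<in>UNIV. g p $ e $ a * ginv g p $ a $ s) * E s)"
    unfolding christoffel_def E_def[symmetric]
    by (simp add: sum_distrib_left sum_distrib_right algebra_simps) (subst sum.swap, simp)
  also have "\<dots> = E e / 2"
  proof -
    have "\<And>s. (\<Sum>a\<in>UNIV. g p $ e $ a * ginv g p $ a $ s) = (if e = s then 1 else 0)"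
      using matrix_inv_right_entry[OF metric_det_nonzero[OF pU]] unfolding ginv_def by blast
    then have "(\<Sum>s\<in>UNIV. (\<Sum>a\<in>UNIV. g p $ e $ a * ginv g p $ a $ s) * E s) = (\<Sum>s\<in>UNIV. if e = s then E s else 0)"
      by (intro sum.cong) auto
    then show ?thesis by simp
  qed
  finally show ?thesis unfolding E_def .
qed

lemma christoffel_quadratic:
  assumes pU: "p \<in> U"
  shows "(\<Sum>a\<in>UNIV. g p $ a $ e * (\<Sum>b\<in>UNIV. \<Sum>c\<in>UNIV. christoffel g a b c p * v b * v c))
       = (\<Sum>b\<in>UNIV. \<Sum>c\<in>UNIV. pd b (\<lambda>q. g q $ e $ c) p * v b * v c)
         - (\<Sum>b\<in>UNIV. \<Sum>c\<in>UNIV. pd e (\<lambda>q. g q $ b $ c) p * v b * v c) / 2"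
proof -
  let ?dG = "\<lambda>c a b. pd c (\<lambda>q. g q $ a $ b) p"
  let ?X = "\<Sum>b\<in>UNIV. \<Sum>c\<in>UNIV. ?dG b e c * v b * v c"
  have "(\<Sum>a\<in>UNIV. g p $ a $ e * (\<Sum>b\<in>UNIV. \<Sum>c\<in>UNIV. christoffel g a b c p * v b * v c))
      = (\<Sum>b\<in>UNIV. \<Sum>c\<in>UNIV. (\<Sum>a\<in>UNIV. g p $ e $ a * christoffel g a b c p) * v b * v c)"
    unfolding sum_distrib_left sum_distrib_right metric_symmetric[OF pU, of _ e]
    by (subst sum.swap, rule sum.cong, simp, subst sum.swap, simp add: mult_ac)
  also have "\<dots> = (\<Sum>b\<in>UNIV. \<Sum>c\<in>UNIV. (?dG b e c + ?dG c e b - ?dG e b c) / 2 * v b * v c)"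
    by (simp only: christoffel_lowered[OF pU])
  also have "\<dots> = (?X + (\<Sum>b\<in>UNIV. \<Sum>c\<in>UNIV. ?dG c e b * v b * v c)
      - (\<Sum>b\<in>UNIV. \<Sum>c\<in>UNIV. ?dG e b c * v b * v c)) / 2"
    by (simp add: sum.distrib sum_subtractf sum_divide_distrib add_divide_distrib diff_divide_distrib
        algebra_simps)
  also have "(\<Sum>b\<in>UNIV. \<Sum>c\<in>UNIV. ?dG c e b * v b * v c) = ?X"
    by (subst sum.swap) (simp only: mult_ac)
  finally show ?thesis by simp
qed

lemma christoffel_trace:
  assumes pU: "p \<in> U"
  shows "(\<Sum>a\<in>UNIV. christoffel g a a c p)
     = (1/2) * (\<Sum>k\<in>UNIV. \<Sum>l\<in>UNIV. pd c (\<lambda>q. g q $ k $ l) p * ginv g p $ l $ k)"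
proof -
  have cancel: "(\<Sum>a\<in>UNIV. \<Sum>s\<in>UNIV. ginv g p $ a $ s * pd a (\<lambda>q. g q $ s $ c) p)
        = (\<Sum>a\<in>UNIV. \<Sum>s\<in>UNIV. ginv g p $ a $ s * pd s (\<lambda>q. g q $ a $ c) p)"
    by (subst sum.swap) (simp add: inverse_metric_symmetric[OF pU])
  have trace: "(\<Sum>a\<in>UNIV. \<Sum>s\<in>UNIV. ginv g p $ a $ s * pd c (\<lambda>q. g q $ s $ a) p)
        = (\<Sum>k\<in>UNIV. \<Sum>l\<in>UNIV. pd c (\<lambda>q. g q $ k $ l) p * ginv g p $ l $ k)"
    by (subst sum.swap) (simp add: mult.commute)
  have "(\<Sum>a\<in>UNIV. christoffel g a a c p) = (1/2) * ((\<Sum>a\<in>UNIV. \<Sum>s\<in>UNIV. ginv g p $ a $ s * pd a (\<lambda>q. g q $ s $ c) p)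
     + (\<Sum>a\<in>UNIV. \<Sum>s\<in>UNIV. ginv g p $ a $ s * pd c (\<lambda>q. g q $ s $ a) p)
     - (\<Sum>a\<in>UNIV. \<Sum>s\<in>UNIV. ginv g p $ a $ s * pd s (\<lambda>q. g q $ a $ c) p))"
    unfolding christoffel_def
    by (simp add: sum_distrib_left[symmetric] sum.distrib sum_subtractf algebra_simps sum_divide_distrib)
  then show ?thesis unfolding cancel trace by simp
qed

text \<open>Identity (1) of the proof: d_c sqrt(-det g) = sqrt(-det g) Gamma^a_{ac}.\<close>

lemma volume_derivative:
  assumes pU: "p \<in> U"
  shows "metric_volume g differentiable (at p)"
    and "pd c (metric_volume g) p = metric_volume g p * (\<Sum>a\<in>UNIV. christoffel g a a c p)"
proof -
  have dg: "\<And>a b. (\<lambda>q. g q $ a $ b) differentiable (at p)" using metric_differentiable[OF pU] .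
  have dd: "(\<lambda>q. det (g q)) differentiable (at p)" by (rule FD_det(1)[OF dg])
  then have dm: "(\<lambda>q. - det (g q)) differentiable (at p)" by simp
  have pos: "- det (g p) > 0" using metric_det_neg[OF pU] by simp
  show "metric_volume g differentiable (at p)"
    unfolding metric_volume_def[abs_def] by (rule FD_sqrt(1)[OF dm pos])
  define T where "T = (\<Sum>k\<in>UNIV. \<Sum>l\<in>UNIV. FD (\<lambda>q. g q $ k $ l) p (ev c) * matrix_inv (g p) $ l $ k)"
  have "pd c (metric_volume g) p = - (det (g p) * T) / (2 * sqrt (- det (g p)))"
    unfolding metric_volume_def[abs_def] pd_def FD_sqrt(2)[OF dm pos] FD_minus[OF dd]
      FD_det_inverse[OF dg metric_det_nonzero[OF pU]] T_def ..
  also have "\<dots> = sqrt (- det (g p)) * (T / 2)"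
  proof -
    have "- (d * T) / (2 * s) = s * (T / 2)" if "s > 0" "s * s = - d" for s d :: real
    proof -
      have "- (d * T) = s * s * T" using that(2) by simp
      then show ?thesis using that(1) by (simp add: field_simps)
    qed
    then show ?thesis using pos by simp
  qed
  also have "T / 2 = (\<Sum>a\<in>UNIV. christoffel g a a c p)"
    unfolding christoffel_trace[OF pU] T_def pd_def ginv_def by simp
  finally show "pd c (metric_volume g) p = metric_volume g p * (\<Sum>a\<in>UNIV. christoffel g a a c p)"
    unfolding metric_volume_def .
qed

lemma volume_derivative_along:
  assumes pU: "p \<in> U"
  shows "dirderiv X (metric_volume g) p
       = metric_volume g p * (\<Sum>a\<in>UNIV. \<Sum>b\<in>UNIV. christoffel g a a b p * X p $ b)"
  unfolding dirderiv_def volume_derivative(2)[OF pU]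
  by (subst sum.swap) (simp add: sum_distrib_left sum_distrib_right algebra_simps)

end

subsection \<open>A null graph in a Lorentzian chart\<close>

lemma gnV_components: "gnV g nf q = (\<Sum>a\<in>UNIV. g q $ a $ None * nf q $ a)"
  unfolding gnV_def gform_def by (rule sum.cong) (simp_all add: axis_def if_distrib cong: if_cong)

text \<open>Regrouping the total spatial divergence of a flux W N^i restricted to a graph with
  slopes s_i, for N tangent to the graph (N^0 = N^i s_i): with A_c = d_c W, K = W and
  dN c a = d_c N^a it is N(W) + W d_a N^a plus a transversal term.\<close>

lemma graph_total_divergence:
  fixes N A :: "'n::finite option \<Rightarrow> real" and dN :: "'n option \<Rightarrow> 'n option \<Rightarrow> real"
    and s :: "'n \<Rightarrow> real"
  assumes tangent: "N None = (\<Sum>i\<in>UNIV. N (Some i) * s i)"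
  shows "(\<Sum>i\<in>UNIV. A (Some i) * N (Some i) + K * dN (Some i) (Some i)
            + (A None * N (Some i) + K * dN None (Some i)) * s i)
       = (\<Sum>c\<in>UNIV. N c * A c) + K * (\<Sum>c\<in>UNIV. dN c c)
            + K * ((\<Sum>i\<in>UNIV. dN None (Some i) * s i) - dN None None)"
proof -
  have "(\<Sum>i\<in>UNIV. A (Some i) * N (Some i) + K * dN (Some i) (Some i)
            + (A None * N (Some i) + K * dN None (Some i)) * s i)
      = (\<Sum>i\<in>UNIV. N (Some i) * A (Some i)) + K * (\<Sum>i\<in>UNIV. dN (Some i) (Some i))
          + A None * (\<Sum>i\<in>UNIV. N (Some i) * s i) + K * (\<Sum>i\<in>UNIV. dN None (Some i) * s i)"
    by (simp add: sum.distrib sum_distrib_left algebra_simps)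
  then show ?thesis using tangent by (simp add: sum_over_option algebra_simps)
qed

locale null_graph_chart = lorentzian_chart g U
  for g :: "real \<times> (real^'n::finite) \<Rightarrow> real^('n option)^('n option)"
    and U :: "(real \<times> (real^'n)) set" +
  fixes Om :: "(real^'n) set"
    and h :: "real^'n \<Rightarrow> real"
    and nf :: "real \<times> (real^'n) \<Rightarrow> real^('n option)"
    and kappa :: "real \<times> (real^'n) \<Rightarrow> real"
  assumes base_open: "open Om"
    and graph_in_chart: "\<And>x. x \<in> Om \<Longrightarrow> (h x, x) \<in> U"
    and graph_differentiable: "\<And>x. x \<in> Om \<Longrightarrow> h differentiable (at x)"
    and graph_null: "\<And>x. x \<in> Om \<Longrightarrow> null_graph g h x"
    and normal_differentiable: "\<And>a p. p \<in> U \<Longrightarrow> (\<lambda>q. nf q $ a) differentiable (at p)"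
    and normal_lightlike: "\<And>p. p \<in> U \<Longrightarrow> gform (g p) (nf p) (nf p) = 0"
    and normal_future: "\<And>p. p \<in> U \<Longrightarrow> gnV g nf p < 0"
    and normal_tangent: "\<And>x. x \<in> Om \<Longrightarrow> graph_tangent h x (nf (h x, x))"
    and normal_pregeodesic: "\<And>p. p \<in> U \<Longrightarrow> covd g nf nf p = kappa p *\<^sub>R nf p"
begin

lemma gnV_nonzero: "p \<in> U \<Longrightarrow> gnV g nf p \<noteq> 0"
  using normal_future by (metis less_irrefl)

lemma normal_time_component:
  assumes x: "x \<in> Om"
  shows "nf (h x, x) $ None = (\<Sum>i\<in>UNIV. nf (h x, x) $ Some i * spd i h x)"
proof -
  obtain w where w0: "nf (h x, x) $ None = FD h x w" and wS: "\<forall>j. nf (h x, x) $ Some j = w $ j"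
    using normal_tangent x unfolding graph_tangent_def by blast
  have "linear (FD h x)" using graph_differentiable[OF x] linear_frechet_derivative by blast
  from linear_axis_expansion[OF this, of w] show ?thesis unfolding w0 spd_def using wS by simp
qed

text \<open>Since the graph is null, its degenerate direction and n are orthogonal null vectors,
  hence parallel, so n is orthogonal to the tangent vector d_i + d_i h d_0.\<close>

lemma normal_lowered_spatial:
  assumes x: "x \<in> Om"
  shows "(\<Sum>a\<in>UNIV. g (h x, x) $ a $ Some i * nf (h x, x) $ a) = - gnV g nf (h x, x) * spd i h x"
proof -
  let ?p = "(h x, x)"
  have pU: "?p \<in> U" using graph_in_chart x by blast
  obtain v where vt: "graph_tangent h x v" and v0: "v \<noteq> 0"
    and vo: "\<forall>u. graph_tangent h x u \<longrightarrow> gform (g ?p) v u = 0"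
    using graph_null x unfolding null_graph_def by blast
  have "\<exists>c. nf ?p = c *\<^sub>R v"
    by (rule lorentzian_null_orthogonal_parallel[OF _ v0])
      (use metric_lorentzian pU vo vt normal_tangent x normal_lightlike in auto)
  then obtain c where c: "nf ?p = c *\<^sub>R v" by blast
  define u :: "real^('n option)" where "u = (\<chi> a. case a of None \<Rightarrow> spd i h x | Some j \<Rightarrow> axis i 1 $ j)"
  have "graph_tangent h x u"
    unfolding graph_tangent_def u_def spd_def by (intro exI[of _ "axis i 1"]) simp
  then have "gform (g ?p) (nf ?p) u = 0" unfolding c gform_scaleR_left using vo by simp
  moreover have "gform (g ?p) (nf ?p) u = gnV g nf ?p * spd i h x
       + (\<Sum>a\<in>UNIV. g ?p $ a $ Some i * nf ?p $ a)"
  proof -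
    have "(\<Sum>j\<in>UNIV. \<Sum>a\<in>UNIV. g ?p $ a $ Some j * nf ?p $ a * u $ Some j)
          = (\<Sum>j\<in>UNIV. if j = i then (\<Sum>a\<in>UNIV. g ?p $ a $ Some j * nf ?p $ a) else 0)"
      by (rule sum.cong) (auto simp: u_def axis_def)
    moreover have "gform (g ?p) (nf ?p) u = (\<Sum>a\<in>UNIV. g ?p $ a $ None * nf ?p $ a * u $ None)
        + (\<Sum>j\<in>UNIV. \<Sum>a\<in>UNIV. g ?p $ a $ Some j * nf ?p $ a * u $ Some j)"
      unfolding gform_def sum_over_option[of "\<lambda>b. _ b"]
      by (simp add: sum.distrib) (subst sum.swap, rule refl)
    ultimately show ?thesis by (simp add: u_def sum_distrib_right gnV_components)
  qed
  ultimately show ?thesis by linarith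
qed

lemma bracket_normal:
  assumes x: "x \<in> Om"
  shows "bracket g h i x = nf (h x, x) $ Some i / (- gnV g nf (h x, x))"
proof -
  let ?p = "(h x, x)"
  have pU: "?p \<in> U" using graph_in_chart x by blast
  define psi where "psi = - gnV g nf ?p"
  have psi0: "psi \<noteq> 0" using gnV_nonzero[OF pU] psi_def by simp
  define w where "w b = (\<Sum>a\<in>UNIV. g ?p $ a $ b * nf ?p $ a) / psi" for b
  have wN: "w None = -1" unfolding w_def gnV_components[symmetric] using psi0 psi_def by simp
  have wS: "w (Some j) = spd j h x" for j unfolding w_def using normal_lowered_spatial[OF x] psi0 psi_def by simp
  have "bracket g h i x = (\<Sum>b\<in>UNIV. ginv g ?p $ Some i $ b * w b)"
    unfolding bracket_def sum_over_option wN wS by simp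
  also have "\<dots> = (\<Sum>a\<in>UNIV. nf ?p $ a * (\<Sum>b\<in>UNIV. ginv g ?p $ Some i $ b * g ?p $ b $ a)) / psi"
    unfolding w_def using metric_symmetric[OF pU]
    by (simp add: sum_distrib_left sum_divide_distrib algebra_simps) (subst sum.swap, simp)
  also have "\<dots> = (\<Sum>a\<in>UNIV. nf ?p $ a * (if Some i = a then 1 else 0)) / psi"
    using matrix_inv_left_entry[OF metric_det_nonzero[OF pU]] unfolding ginv_def by simp
  also have "\<dots> = nf ?p $ Some i / psi"
    by (simp add: if_distrib cong: if_cong)
  finally show ?thesis unfolding psi_def .
qed

lemma ntilde_normal: "y \<in> Om \<Longrightarrow> ntilde g h nf i y = nf (h y, y) $ Some i"
  unfolding ntilde_def bracket_normal using gnV_nonzero graph_in_chart by simp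

text \<open>Differentiating g(n,n) = 0: n_b d_c n^b = -(1/2) d_c g_{ab} n^a n^b.\<close>

lemma normal_lightlike_derivative:
  assumes pU: "p \<in> U"
  shows "(\<Sum>b\<in>UNIV. (\<Sum>a\<in>UNIV. g p $ a $ b * nf p $ a) * pd c (\<lambda>q. nf q $ b) p)
       = - (\<Sum>a\<in>UNIV. \<Sum>b\<in>UNIV. pd c (\<lambda>q. g q $ a $ b) p * nf p $ a * nf p $ b) / 2"
proof -
  let ?f = "\<lambda>q. \<Sum>a\<in>UNIV. \<Sum>b\<in>UNIV. g q $ a $ b * nf q $ a * nf q $ b"
  have dgn: "\<And>a b. (\<lambda>q. g q $ a $ b * nf q $ a) differentiable (at p)"
    using metric_differentiable[OF pU] normal_differentiable[OF pU] by simp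
  have dgnn: "\<And>a b. (\<lambda>q. g q $ a $ b * nf q $ a * nf q $ b) differentiable (at p)"
    using dgn normal_differentiable[OF pU] by simp
  have drow: "\<And>a. (\<lambda>q. \<Sum>b\<in>UNIV. g q $ a $ b * nf q $ a * nf q $ b) differentiable (at p)"
    using dgnn by (intro differentiable_sum) auto
  have "\<And>q. q \<in> U \<Longrightarrow> 0 = ?f q" using normal_lightlike by (simp add: gform_def)
  from FD_local(2)[OF differentiable_const chart_open pU this]
  have "FD ?f p (ev c) = 0" by (simp add: FD_const)
  moreover have "FD ?f p (ev c) = (\<Sum>a\<in>UNIV. \<Sum>b\<in>UNIV. pd c (\<lambda>q. g q $ a $ b) p * nf p $ a * nf p $ b
      + g p $ a $ b * pd c (\<lambda>q. nf q $ a) p * nf p $ b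
      + g p $ a $ b * nf p $ a * pd c (\<lambda>q. nf q $ b) p)"
  proof -
    have "FD ?f p (ev c) = (\<Sum>a\<in>UNIV. FD (\<lambda>q. \<Sum>b\<in>UNIV. g q $ a $ b * nf q $ a * nf q $ b) p (ev c))"
      by (rule FD_sum) (auto intro: drow)
    also have "\<dots> = (\<Sum>a\<in>UNIV. \<Sum>b\<in>UNIV. FD (\<lambda>q. g q $ a $ b * nf q $ a * nf q $ b) p (ev c))"
      by (intro sum.cong refl FD_sum) (auto intro: dgnn)
    finally show ?thesis
      unfolding pd_def FD_mult[OF dgn normal_differentiable[OF pU]]
        FD_mult[OF metric_differentiable[OF pU] normal_differentiable[OF pU]]
      by (simp add: algebra_simps)
  qed
  moreover have "(\<Sum>a\<in>UNIV. \<Sum>b\<in>UNIV. g p $ a $ b * pd c (\<lambda>q. nf q $ a) p * nf p $ b)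
      = (\<Sum>a\<in>UNIV. \<Sum>b\<in>UNIV. g p $ a $ b * nf p $ a * pd c (\<lambda>q. nf q $ b) p)"
    by (rule sum_symmetric_kernel_swap) (rule metric_symmetric[OF pU])
  moreover have "(\<Sum>b\<in>UNIV. (\<Sum>a\<in>UNIV. g p $ a $ b * nf p $ a) * pd c (\<lambda>q. nf q $ b) p)
      = (\<Sum>a\<in>UNIV. \<Sum>b\<in>UNIV. g p $ a $ b * nf p $ a * pd c (\<lambda>q. nf q $ b) p)"
    by (subst sum.swap) (simp add: sum_distrib_right)
  ultimately show ?thesis by (simp add: sum.distrib)
qed

text \<open>Identity (3) of the proof: the transversal term, with Q = d_0 g_{ab} n^a n^b.\<close>

lemma transversal_derivative:
  assumes x: "x \<in> Om"
  defines "p \<equiv> (h x, x)"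
  shows "(- gnV g nf p) * ((\<Sum>i\<in>UNIV. pd None (\<lambda>q. nf q $ Some i) p * spd i h x) - pd None (\<lambda>q. nf q $ None) p)
       = - (\<Sum>a\<in>UNIV. \<Sum>b\<in>UNIV. pd None (\<lambda>q. g q $ a $ b) p * nf p $ a * nf p $ b) / 2"
proof -
  have pU: "p \<in> U" using graph_in_chart x p_def by blast
  have "(\<Sum>b\<in>UNIV. (\<Sum>a\<in>UNIV. g p $ a $ b * nf p $ a) * pd None (\<lambda>q. nf q $ b) p)
      = (\<Sum>a\<in>UNIV. g p $ a $ None * nf p $ a) * pd None (\<lambda>q. nf q $ None) p
        + (\<Sum>i\<in>UNIV. (\<Sum>a\<in>UNIV. g p $ a $ Some i * nf p $ a) * pd None (\<lambda>q. nf q $ Some i) p)"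
    by (rule sum_over_option)
  also have "\<dots> = gnV g nf p * pd None (\<lambda>q. nf q $ None) p
        + (\<Sum>i\<in>UNIV. (- gnV g nf p * spd i h x) * pd None (\<lambda>q. nf q $ Some i) p)"
    unfolding p_def normal_lowered_spatial[OF x] gnV_components ..
  finally have "(\<Sum>b\<in>UNIV. (\<Sum>a\<in>UNIV. g p $ a $ b * nf p $ a) * pd None (\<lambda>q. nf q $ b) p)
      = gnV g nf p * pd None (\<lambda>q. nf q $ None) p
        + (\<Sum>i\<in>UNIV. (- gnV g nf p * spd i h x) * pd None (\<lambda>q. nf q $ Some i) p)" .
  then show ?thesis
    unfolding normal_lightlike_derivative[OF pU, symmetric]
    by (simp add: algebra_simps sum_distrib_left)
qed

lemma gnV_derivative:
  assumes pU: "p \<in> U"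
  shows "gnV g nf differentiable (at p)"
    and "pd c (gnV g nf) p
       = (\<Sum>a\<in>UNIV. pd c (\<lambda>q. g q $ a $ None) p * nf p $ a + g p $ a $ None * pd c (\<lambda>q. nf q $ a) p)"
proof -
  have gnV: "gnV g nf = (\<lambda>q. \<Sum>a\<in>UNIV. g q $ a $ None * nf q $ a)"
    by (simp add: gnV_components[abs_def])
  have d: "\<And>a. (\<lambda>q. g q $ a $ None * nf q $ a) differentiable (at p)"
    using metric_differentiable[OF pU] normal_differentiable[OF pU] by simp
  then show "gnV g nf differentiable (at p)" unfolding gnV by (intro differentiable_sum) auto
  show "pd c (gnV g nf) p
       = (\<Sum>a\<in>UNIV. pd c (\<lambda>q. g q $ a $ None) p * nf p $ a + g p $ a $ None * pd c (\<lambda>q. nf q $ a) p)"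
  proof -
    have "FD (\<lambda>q. \<Sum>a\<in>UNIV. g q $ a $ None * nf q $ a) p (ev c)
        = (\<Sum>a\<in>UNIV. FD (\<lambda>q. g q $ a $ None * nf q $ a) p (ev c))"
      by (rule FD_sum) (auto intro: d)
    then show ?thesis
      unfolding pd_def gnV FD_mult[OF metric_differentiable[OF pU] normal_differentiable[OF pU]] .
  qed
qed

text \<open>Identity (2) of the proof: by the pregeodesic equation,
  n(g(n,V)) = kappa g(n,V) + Q/2 with Q = d_0 g_{ab} n^a n^b.\<close>

lemma gnV_derivative_along_normal:
  assumes pU: "p \<in> U"
  shows "dirderiv nf (gnV g nf) p
       = kappa p * gnV g nf p + (\<Sum>a\<in>UNIV. \<Sum>b\<in>UNIV. pd None (\<lambda>q. g q $ a $ b) p * nf p $ a * nf p $ b) / 2"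
proof -
  let ?N = "\<lambda>a. nf p $ a"
  let ?dN = "\<lambda>c a. pd c (\<lambda>q. nf q $ a) p"
  let ?dG = "\<lambda>c a b. pd c (\<lambda>q. g q $ a $ b) p"
  let ?NGN = "\<lambda>a. \<Sum>b\<in>UNIV. \<Sum>c\<in>UNIV. christoffel g a b c p * ?N b * ?N c"
  let ?X = "\<Sum>b\<in>UNIV. \<Sum>c\<in>UNIV. ?dG b None c * ?N b * ?N c"
  have along: "dirderiv nf (gnV g nf) p
      = ?X + (\<Sum>a\<in>UNIV. g p $ a $ None * (\<Sum>c\<in>UNIV. ?N c * ?dN c a))"
  proof -
    have "dirderiv nf (gnV g nf) p = (\<Sum>c\<in>UNIV. \<Sum>a\<in>UNIV. ?dG c a None * ?N c * ?N a)
        + (\<Sum>c\<in>UNIV. \<Sum>a\<in>UNIV. g p $ a $ None * (?N c * ?dN c a))"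
      unfolding dirderiv_def gnV_derivative(2)[OF pU] sum_distrib_left distrib_left sum.distrib
      by (simp only: mult_ac)
    moreover have "(\<Sum>c\<in>UNIV. \<Sum>a\<in>UNIV. ?dG c a None * ?N c * ?N a) = ?X"
      using pd_metric_symmetric[OF pU, of _ _ None] by simp
    moreover have "(\<Sum>c\<in>UNIV. \<Sum>a\<in>UNIV. g p $ a $ None * (?N c * ?dN c a))
        = (\<Sum>a\<in>UNIV. g p $ a $ None * (\<Sum>c\<in>UNIV. ?N c * ?dN c a))"
      unfolding sum_distrib_left by (rule sum.swap)
    ultimately show ?thesis by simp
  qed
  have pregeodesic: "(\<Sum>c\<in>UNIV. ?N c * ?dN c a) = kappa p * ?N a - ?NGN a" for a
  proof -
    have "covd g nf nf p $ a = (kappa p *\<^sub>R nf p) $ a" using normal_pregeodesic[OF pU] by simp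
    then show ?thesis unfolding covd_def by simp
  qed
  have "(\<Sum>a\<in>UNIV. g p $ a $ None * (\<Sum>c\<in>UNIV. ?N c * ?dN c a))
      = kappa p * (\<Sum>a\<in>UNIV. g p $ a $ None * ?N a) - (\<Sum>a\<in>UNIV. g p $ a $ None * ?NGN a)"
    unfolding pregeodesic right_diff_distrib sum_subtractf sum_distrib_left by (simp only: mult_ac)
  then show ?thesis
    unfolding along gnV_components christoffel_quadratic[OF pU, of None "\<lambda>a. nf p $ a"] by simp
qed

text \<open>Derivative along n of the weight W = phi vol / (-g(n,V)), combining identities (1) and (2).\<close>

lemma weight_derivative_along_normal:
  assumes pU: "p \<in> U" and phi: "phi differentiable (at p)"
  defines "W \<equiv> \<lambda>q. phi q * metric_volume g q / (- gnV g nf q)"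
  shows "W differentiable (at p)"
    and "dirderiv nf W p
       = (dirderiv nf phi p + phi p * ((\<Sum>a\<in>UNIV. \<Sum>b\<in>UNIV. christoffel g a a b p * nf p $ b) - kappa p))
           * metric_volume g p / (- gnV g nf p)
         + W p * (\<Sum>a\<in>UNIV. \<Sum>b\<in>UNIV. pd None (\<lambda>q. g q $ a $ b) p * nf p $ a * nf p $ b) / (2 * (- gnV g nf p))"
proof -
  define psi where "psi = - gnV g nf p"
  let ?vol = "metric_volume g p"
  have dvol: "metric_volume g differentiable (at p)" by (rule volume_derivative(1)[OF pU])
  have dgnV: "gnV g nf differentiable (at p)" by (rule gnV_derivative(1)[OF pU])
  have dnum: "(\<lambda>q. phi q * metric_volume g q) differentiable (at p)" using phi dvol by simp
  have dden: "(\<lambda>q. - gnV g nf q) differentiable (at p)" using dgnV by simp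
  have psi0: "- gnV g nf p \<noteq> 0" using gnV_nonzero[OF pU] by simp
  show "W differentiable (at p)" unfolding W_def by (rule differentiable_divide[OF dnum dden psi0])
  have dW: "pd c W p = (pd c phi p * ?vol + phi p * pd c (metric_volume g) p) / psi
      + phi p * ?vol * pd c (gnV g nf) p / psi^2" for c
    unfolding W_def pd_def FD_divide[OF dnum dden psi0] FD_mult[OF phi dvol] FD_minus[OF dgnV] psi_def
    by simp
  let ?dphi = "\<lambda>c. nf p $ c * pd c phi p"
  let ?dvol = "\<lambda>c. nf p $ c * pd c (metric_volume g) p"
  let ?dgnV = "\<lambda>c. nf p $ c * pd c (gnV g nf) p"
  have "dirderiv nf W p = (\<Sum>c\<in>UNIV. (?dphi c * ?vol + phi p * ?dvol c) / psi + phi p * ?vol * ?dgnV c / psi^2)"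
    unfolding dirderiv_def dW by (simp add: algebra_simps add_divide_distrib)
  also have "\<dots> = ((\<Sum>c\<in>UNIV. ?dphi c) * ?vol + phi p * (\<Sum>c\<in>UNIV. ?dvol c)) / psi
      + phi p * ?vol * (\<Sum>c\<in>UNIV. ?dgnV c) / psi^2"
    by (simp add: sum.distrib sum_divide_distrib sum_distrib_left sum_distrib_right add_divide_distrib)
  also have "(\<Sum>c\<in>UNIV. ?dvol c) = ?vol * (\<Sum>a\<in>UNIV. \<Sum>b\<in>UNIV. christoffel g a a b p * nf p $ b)"
    using volume_derivative_along[OF pU, of nf] unfolding dirderiv_def .
  also have "(\<Sum>c\<in>UNIV. ?dgnV c) = kappa p * (- psi)
      + (\<Sum>a\<in>UNIV. \<Sum>b\<in>UNIV. pd None (\<lambda>q. g q $ a $ b) p * nf p $ a * nf p $ b) / 2"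
    using gnV_derivative_along_normal[OF pU] unfolding dirderiv_def psi_def by simp
  finally have derivative: "dirderiv nf W p = (dirderiv nf phi p * ?vol
        + phi p * (?vol * (\<Sum>a\<in>UNIV. \<Sum>b\<in>UNIV. christoffel g a a b p * nf p $ b))) / psi
      + phi p * ?vol * (kappa p * (- psi)
        + (\<Sum>a\<in>UNIV. \<Sum>b\<in>UNIV. pd None (\<lambda>q. g q $ a $ b) p * nf p $ a * nf p $ b) / 2) / psi^2"
    unfolding dirderiv_def .
  have "W p = phi p * ?vol / psi" by (simp add: W_def psi_def)
  then show "dirderiv nf W p
       = (dirderiv nf phi p + phi p * ((\<Sum>a\<in>UNIV. \<Sum>b\<in>UNIV. christoffel g a a b p * nf p $ b) - kappa p))
           * ?vol / (- gnV g nf p)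
         + W p * (\<Sum>a\<in>UNIV. \<Sum>b\<in>UNIV. pd None (\<lambda>q. g q $ a $ b) p * nf p $ a * nf p $ b) / (2 * (- gnV g nf p))"
    using psi0 unfolding derivative psi_def[symmetric]
    by (simp add: field_simps power2_eq_square)
qed

text \<open>Divergence of a flux F_i = W n^i along the graph, for a differentiable spacetime
  weight W: the chain rule and the tangency of n regroup it as n(W) + W d_a n^a plus
  W times the transversal term of identity (3).\<close>

lemma tangent_flux_divergence:
  assumes x: "x \<in> Om" and dW: "W differentiable (at (h x, x))"
    and F: "\<And>i y. y \<in> Om \<Longrightarrow> F i y = W (h y, y) * nf (h y, y) $ Some i"
  defines "p \<equiv> (h x, x)"
  shows "F i differentiable (at x)"
    and "(\<Sum>i\<in>UNIV. spd i (F i) x)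
       = dirderiv nf W p + W p * (\<Sum>c\<in>UNIV. pd c (\<lambda>q. nf q $ c) p)
         + W p * ((\<Sum>i\<in>UNIV. pd None (\<lambda>q. nf q $ Some i) p * spd i h x) - pd None (\<lambda>q. nf q $ None) p)"
proof -
  have pU: "p \<in> U" using graph_in_chart x p_def by blast
  have dflux: "(\<lambda>q. W q * nf q $ Some j) differentiable (at p)" for j
    using dW normal_differentiable[OF pU] p_def by simp
  have F_graph: "W (h y, y) * nf (h y, y) $ Some j = F j y" if "y \<in> Om" for j y
    using F[OF that] by simp
  note graph = spd_graph_composition[OF dflux[unfolded p_def] graph_differentiable[OF x]]
  show "F i differentiable (at x)" by (rule spd_local(1)[OF graph(1) base_open x F_graph])
  have chain: "spd j (F j) x = pd (Some j) (\<lambda>q. W q * nf q $ Some j) p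
      + pd None (\<lambda>q. W q * nf q $ Some j) p * spd j h x" for j
    using spd_local(2)[OF graph(1) base_open x F_graph] graph(2) p_def by simp
  have product: "pd c (\<lambda>q. W q * nf q $ Some j) p
      = pd c W p * nf p $ Some j + W p * pd c (\<lambda>q. nf q $ Some j) p" for c j
    unfolding pd_def by (rule FD_mult[OF dW[folded p_def] normal_differentiable[OF pU]])
  show "(\<Sum>i\<in>UNIV. spd i (F i) x)
       = dirderiv nf W p + W p * (\<Sum>c\<in>UNIV. pd c (\<lambda>q. nf q $ c) p)
         + W p * ((\<Sum>i\<in>UNIV. pd None (\<lambda>q. nf q $ Some i) p * spd i h x) - pd None (\<lambda>q. nf q $ None) p)"
    unfolding chain product dirderiv_def
    by (rule graph_total_divergence[where A = "\<lambda>c. pd c W p" and N = "\<lambda>a. nf p $ a"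
          and dN = "\<lambda>c a. pd c (\<lambda>q. nf q $ a) p" and s = "\<lambda>i. spd i h x"])
      (simp add: p_def normal_time_component[OF x])
qed

text \<open>The divergence identity for any flux F that agrees on Om with
  phi n^i sqrt(-det g) / (-g(n,V)) along the graph: identities (2) and (3) make the
  Q-terms of n(W) and of the transversal term cancel.\<close>

lemma weighted_flux_divergence:
  assumes x: "x \<in> Om" and phi: "\<And>p. p \<in> U \<Longrightarrow> phi differentiable (at p)"
    and F: "\<And>i y. y \<in> Om \<Longrightarrow>
              F i y = phi (h y, y) * nf (h y, y) $ Some i * volH g h y / (- gnV g nf (h y, y))"
  shows "F i differentiable (at x)"
    and "(\<Sum>i\<in>UNIV. spd i (F i) x)
       = (phi (h x, x) * thetaH g h nf kappa x + dirderiv nf phi (h x, x)) * volH g h x / (- gnV g nf (h x, x))"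
proof -
  define p where "p = (h x, x)"
  have pU: "p \<in> U" using graph_in_chart x p_def by blast
  define W where "W = (\<lambda>q. phi q * metric_volume g q / (- gnV g nf q))"
  have dW: "W differentiable (at p)"
    using weight_derivative_along_normal(1)[OF pU phi[OF pU]] unfolding W_def .
  have F_weighted: "F i y = W (h y, y) * nf (h y, y) $ Some i" if "y \<in> Om" for i y
    using F[OF that] by (simp add: W_def volH_def metric_volume_def)
  note flux = tangent_flux_divergence[OF x dW[unfolded p_def] F_weighted]
  show "F i differentiable (at x)" by (rule flux(1))
  let ?psi = "- gnV g nf p" and ?vol = "metric_volume g p"
  let ?Q = "\<Sum>a\<in>UNIV. \<Sum>b\<in>UNIV. pd None (\<lambda>q. g q $ a $ b) p * nf p $ a * nf p $ b"
  let ?T = "(\<Sum>i\<in>UNIV. pd None (\<lambda>q. nf q $ Some i) p * spd i h x) - pd None (\<lambda>q. nf q $ None) p"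
  have regroup: "(\<Sum>i\<in>UNIV. spd i (F i) x)
      = dirderiv nf W p + W p * (\<Sum>c\<in>UNIV. pd c (\<lambda>q. nf q $ c) p) + W p * ?T"
    unfolding p_def by (rule flux(2))
  have psi0: "?psi \<noteq> 0" using gnV_nonzero[OF pU] by simp
  have transversal: "?T = - ?Q / (2 * ?psi)"
  proof -
    have "?psi * ?T = - ?Q / 2" using transversal_derivative[OF x] by (simp add: p_def)
    then have "?T = (- ?Q / 2) / ?psi"
      unfolding nonzero_eq_divide_eq[OF psi0] by (simp only: mult.commute)
    then show ?thesis by simp
  qed
  have weight: "dirderiv nf W p
      = (dirderiv nf phi p + phi p * ((\<Sum>a\<in>UNIV. \<Sum>b\<in>UNIV. christoffel g a a b p * nf p $ b) - kappa p))
          * ?vol / ?psi + W p * ?Q / (2 * ?psi)"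
    unfolding W_def by (rule weight_derivative_along_normal(2)[OF pU phi[OF pU]])
  have weight_at: "W p = phi p * ?vol / ?psi" unfolding W_def ..
  have "(\<Sum>i\<in>UNIV. spd i (F i) x) = (phi p * thetaH g h nf kappa x + dirderiv nf phi p) * ?vol / ?psi"
    unfolding regroup transversal weight weight_at thetaH_def divergence_def p_def[symmetric]
    using psi0 by (simp add: field_simps)
  then show "(\<Sum>i\<in>UNIV. spd i (F i) x)
       = (phi (h x, x) * thetaH g h nf kappa x + dirderiv nf phi (h x, x)) * volH g h x / (- gnV g nf (h x, x))"
    unfolding p_def volH_def metric_volume_def .
qed

lemma divergence_identity:
  assumes phi: "\<And>p. p \<in> U \<Longrightarrow> phi differentiable (at p)" and x: "x \<in> Om"
  defines "F \<equiv> \<lambda>i y. phi (h y, y) * ntilde g h nf i y * volH g h y / (- gnV g nf (h y, y))"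
  shows "(\<forall>i. F i differentiable (at x)) \<and>
    (\<Sum>i\<in>UNIV. spd i (F i) x)
      = (phi (h x, x) * thetaH g h nf kappa x + dirderiv nf phi (h x, x)) * volH g h x / (- gnV g nf (h x, x))"
  using weighted_flux_divergence[OF x phi, of F] by (simp add: F_def ntilde_normal)

lemma expansion_formula:
  assumes x: "x \<in> Om"
  shows "thetaH g h nf kappa x =
           (- gnV g nf (h x, x)) / volH g h x * (\<Sum>i\<in>UNIV. spd i (\<lambda>y. bracket g h i y * volH g h y) x)"
proof -
  have pU: "(h x, x) \<in> U" using graph_in_chart x by blast
  have "dirderiv nf (\<lambda>q. 1) (h x, x) = 0"
    unfolding dirderiv_def pd_def by (simp add: FD_const)
  moreover have "(\<Sum>i\<in>UNIV. spd i (\<lambda>y. bracket g h i y * volH g h y) x)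
      = (1 * thetaH g h nf kappa x + dirderiv nf (\<lambda>q. 1) (h x, x)) * volH g h x / (- gnV g nf (h x, x))"
    by (rule weighted_flux_divergence(2)[OF x]) (simp_all add: bracket_normal)
  moreover have "- gnV g nf (h x, x) > 0" using normal_future[OF pU] by simp
  moreover have "volH g h x > 0" unfolding volH_def using metric_det_neg[OF pU] by simp
  ultimately show ?thesis by (simp add: field_simps)
qed

end

text \<open>The hypotheses of the theorem, with the C^k regularity weakened to differentiability,
  make up the locale null_graph_chart; both claims are then the two lemmas above.\<close>

theorem mainTheorem9:
  fixes g :: "real \<times> (real^'n::finite) \<Rightarrow> real^('n option)^('n option)"
    and U :: "(real \<times> (real^'n)) set"
    and Om :: "(real^'n) set"
    and h :: "real^'n \<Rightarrow> real"
    and nf :: "real \<times> (real^'n) \<Rightarrow> real^('n option)"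
    and kappa :: "real \<times> (real^'n) \<Rightarrow> real"
    and phi :: "real \<times> (real^'n) \<Rightarrow> real"
  assumes U_open: "open U"
    and Om_open: "open Om"
    and graph_in_U: "\<forall>x\<in>Om. (h x, x) \<in> U"
    and g_C3: "\<forall>a b. Ck 3 U (\<lambda>p. g p $ a $ b)"
    and g_lorentz: "\<forall>p\<in>U. lorentzian (g p)"
    and V_timelike: "\<forall>p\<in>U. g p $ None $ None < 0"
    and h_C2: "Ck 2 Om h"
    and H_null: "\<forall>x\<in>Om. null_graph g h x"
    and n_C1: "\<forall>a. Ck 1 U (\<lambda>p. nf p $ a)"
    and n_lightlike: "\<forall>p\<in>U. gform (g p) (nf p) (nf p) = 0"
    and n_nonzero: "\<forall>p\<in>U. nf p \<noteq> 0"
    and n_future: "\<forall>p\<in>U. gnV g nf p < 0"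
    and n_tangent: "\<forall>x\<in>Om. graph_tangent h x (nf (h x, x))"
    and n_geodesic: "\<forall>p\<in>U. covd g nf nf p = kappa p *\<^sub>R nf p"
    and phi_C1: "Ck 1 U phi"
  shows "(\<forall>x\<in>Om.
            (\<forall>i. (\<lambda>y. phi (h y, y) * ntilde g h nf i y * volH g h y / (- gnV g nf (h y, y)))
                   differentiable (at x)) \<and>
            (\<Sum>i\<in>UNIV. spd i (\<lambda>y. phi (h y, y) * ntilde g h nf i y * volH g h y / (- gnV g nf (h y, y))) x)
              = (phi (h x, x) * thetaH g h nf kappa x + dirderiv nf phi (h x, x))
                * volH g h x / (- gnV g nf (h x, x)))
       \<and> (\<forall>x\<in>Om. thetaH g h nf kappa x =
              (- gnV g nf (h x, x)) / volH g h x *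
              (\<Sum>i\<in>UNIV. spd i (\<lambda>y. bracket g h i y * volH g h y) x))"
proof -
  have "null_graph_chart g U Om h nf kappa"
    by unfold_locales
      (use U_open Om_open graph_in_U g_C3 g_lorentz h_C2 H_null n_C1 n_lightlike n_future
         n_tangent n_geodesic in \<open>simp_all add: numeral_eq_Suc\<close>)
  then interpret null_graph_chart g U Om h nf kappa .
  have "\<And>p. p \<in> U \<Longrightarrow> phi differentiable (at p)" using phi_C1 by simp
  then show ?thesis using divergence_identity expansion_formula by blast
qed

end
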